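(* Let $0<\alpha<1/2$ and let $A_I=\{(x,y)\in[0,1]^2: S(x,y)\ge 2\alpha^2\}$. For every $(x,y)\in[0,1]^2\setminus\{(0,0)\}$ there exists $N\ge 0$ such that $G_\alpha^n(x,y)\in A_I$ for all $n\ge N$. Consequently every $G_\alpha$-invariant Borel probability measure $\mu$ on $[0,1]^2$ with $\mu(\{(0,0)\})=0$ satisfies $\mu(A_I)=1$.
   Context: Let $\tau:[0,1]\to[0,1]$ be the symmetric tent map, $\tau(x)=2x$ for $0\le x<1/2$ and $\tau(x)=2-2x$ for $1/2\le x\le 1$. For $0<\alpha<1$ define $G_\alpha:[0,1]^2\to[0,1]^2$ by $G_\alpha(x,y)=(y,\tau(\alpha y+(1-\alpha)x))$. Let $S(x,y)=\alpha y+(1-\alpha)x$. *)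

theory Defs
  imports "HOL-Probability.Probability"
begin

definition tent :: "real \<Rightarrow> real" where
  "tent x = (if x < 1/2 then 2 * x else 2 - 2 * x)"

definition S_map :: "real \<Rightarrow> real \<times> real \<Rightarrow> real" where
  "S_map \<alpha> p = \<alpha> * snd p + (1 - \<alpha>) * fst p"

definition G_map :: "real \<Rightarrow> real \<times> real \<Rightarrow> real \<times> real" where
  "G_map \<alpha> p = (snd p, tent (S_map \<alpha> p))"

definition unit_square :: "(real \<times> real) set" where
  "unit_square = {0..1} \<times> {0..1}"

definition A_I :: "real \<Rightarrow> (real \<times> real) set" where
  "A_I \<alpha> = {p \<in> unit_square. S_map \<alpha> p \<ge> 2 * \<alpha>\<^sup>2}"

definition invariant_borel_prob_on_square ::
  "(real \<times> real \<Rightarrow> real \<times> real) \<Rightarrow> (real \<times> real) measure \<Rightarrow> bool" where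
  "invariant_borel_prob_on_square T M \<longleftrightarrow>
     prob_space M \<and>
     space M = unit_square \<and> sets M = sets (restrict_space borel unit_square) \<and>
     T \<in> measurable M M \<and>
     (\<forall>B \<in> sets M. emeasure M (T -` B \<inter> space M) = emeasure M B)"

end

theory Submission
  imports Defs
begin

text \<open>Let \<open>R\<close> be the set of points of the square where \<open>S \<ge> 2\<alpha>\<^sup>2\<close> and where \<open>S\<close> would still be
  at least \<open>2\<alpha>\<^sup>2\<close> after one more step if the tent map were on its increasing branch. A direct
  computation shows \<open>G\<^sub>\<alpha>(R) \<subseteq> R\<close>. Outside \<open>R\<close> one has \<open>S < \<alpha> < 1/2\<close>, so \<open>G\<^sub>\<alpha>(x,y) = (y, 2S)\<close>,
  and this multiplies \<open>x + y\<close> by at least \<open>min(2 - 2\<alpha>, 1 + 2\<alpha>) > 1\<close>. As \<open>x + y \<le> 2\<close> on the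
  square, every orbit other than that of the fixed point \<open>(0,0)\<close> enters \<open>R\<close> and stays there.
  For an invariant measure the preimages \<open>G\<^sub>\<alpha>\<^sup>-\<^sup>n(R)\<close> all have measure \<open>\<mu>(R)\<close>, increase with \<open>n\<close>
  and cover the square minus the null set \<open>{(0,0)}\<close>, whence \<open>\<mu>(A\<^sub>I) \<ge> \<mu>(R) = 1\<close>.\<close>

lemma measurable_funpow:
  assumes "T \<in> M \<rightarrow>\<^sub>M M"
  shows "T ^^ n \<in> M \<rightarrow>\<^sub>M M"
  by (induction n) (auto intro: measurable_compose[OF _ assms])

lemma emeasure_funpow_vimage:
  assumes T: "T \<in> M \<rightarrow>\<^sub>M M"
    and preserving: "\<And>B. B \<in> sets M \<Longrightarrow> emeasure M (T -` B \<inter> space M) = emeasure M B"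
    and B: "B \<in> sets M"
  shows "emeasure M ((T ^^ n) -` B \<inter> space M) = emeasure M B"
  using B
proof (induction n arbitrary: B)
  case (Suc n)
  have "(T ^^ Suc n) -` B \<inter> space M = (T ^^ n) -` (T -` B \<inter> space M) \<inter> space M"
    using measurable_space[OF measurable_funpow[OF T]] by auto
  moreover have "T -` B \<inter> space M \<in> sets M"
    using T Suc.prems by (rule measurable_sets)
  ultimately show ?case
    using Suc.IH preserving[OF Suc.prems] by metis
qed (simp add: sets.Int_space_eq2)

lemma (in prob_space) emeasure_absorbing_set_eq_1:
  assumes T: "T \<in> M \<rightarrow>\<^sub>M M"
    and preserving: "\<And>B. B \<in> sets M \<Longrightarrow> emeasure M (T -` B \<inter> space M) = emeasure M B"
    and R: "R \<in> sets M" "\<And>x. x \<in> R \<Longrightarrow> T x \<in> R"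
    and Z: "Z \<in> null_sets M"
    and absorbing: "\<And>x. x \<in> space M - Z \<Longrightarrow> \<exists>n. (T ^^ n) x \<in> R"
  shows "emeasure M R = 1"
proof -
  define E where "E n = (T ^^ n) -` R \<inter> space M" for n
  have E_sets: "range E \<subseteq> sets M"
    using measurable_funpow[OF T] R(1) by (auto simp: E_def intro: measurable_sets)
  have "incseq E"
    by (rule incseq_SucI) (auto simp: E_def intro: R(2))
  then have "emeasure M (\<Union>n. E n) = (SUP n. emeasure M (E n))"
    using E_sets by (simp add: SUP_emeasure_incseq)
  also have "\<dots> = emeasure M R"
    unfolding E_def using emeasure_funpow_vimage[OF T preserving R(1)] by simp
  finally have union: "emeasure M (\<Union>n. E n) = emeasure M R" .
  have "(\<Union>n. E n) \<in> sets M"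
    using E_sets by (intro sets.countable_UN) auto
  have "1 = emeasure M (space M - Z)"
    using Z by (simp add: emeasure_Diff_null_set emeasure_space_1)
  also have "\<dots> \<le> emeasure M (\<Union>n. E n)"
    using absorbing \<open>(\<Union>n. E n) \<in> sets M\<close> by (intro emeasure_mono) (auto simp: E_def)
  finally have "1 \<le> emeasure M R"
    using union by simp
  then show ?thesis
    using emeasure_le_1[of R] by simp
qed

lemma S_map_unit_interval:
  assumes "0 \<le> \<alpha>" "\<alpha> \<le> 1" "p \<in> unit_square"
  shows "0 \<le> S_map \<alpha> p" "S_map \<alpha> p \<le> 1"
proof -
  have "\<alpha> * snd p \<le> \<alpha>" "(1 - \<alpha>) * fst p \<le> 1 - \<alpha>"
    using assms by (auto simp: unit_square_def mult_left_le)
  then show "0 \<le> S_map \<alpha> p" "S_map \<alpha> p \<le> 1"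
    using assms by (auto simp: S_map_def unit_square_def)
qed

lemma G_map_unit_square:
  assumes "0 \<le> \<alpha>" "\<alpha> \<le> 1" "p \<in> unit_square"
  shows "G_map \<alpha> p \<in> unit_square"
  using S_map_unit_interval[OF assms] assms(3)
  by (auto simp: G_map_def unit_square_def tent_def)

lemma funpow_G_map_unit_square:
  assumes "0 \<le> \<alpha>" "\<alpha> \<le> 1" "p \<in> unit_square"
  shows "(G_map \<alpha> ^^ n) p \<in> unit_square"
  by (induction n) (auto intro: G_map_unit_square[OF assms(1,2)] simp: assms(3))

text \<open>For \<open>p = (x,y)\<close> with \<open>S(p) < 1/2\<close>, the second constraint says \<open>S(G\<^sub>\<alpha> p) \<ge> 2\<alpha>\<^sup>2\<close>.\<close>

definition trapping_region :: "real \<Rightarrow> (real \<times> real) set" where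
  "trapping_region \<alpha> = {p \<in> unit_square. S_map \<alpha> p \<ge> 2 * \<alpha>\<^sup>2
      \<and> 2 * \<alpha> * S_map \<alpha> p + (1 - \<alpha>) * snd p \<ge> 2 * \<alpha>\<^sup>2}"

lemma trapping_region_subset_A_I: "trapping_region \<alpha> \<subseteq> A_I \<alpha>"
  by (auto simp: trapping_region_def A_I_def)

lemma trapping_region_closed_Int:
  "trapping_region \<alpha> = unit_square \<inter> {p. 2 * \<alpha>\<^sup>2 \<le> S_map \<alpha> p
      \<and> 2 * \<alpha>\<^sup>2 \<le> 2 * \<alpha> * S_map \<alpha> p + (1 - \<alpha>) * snd p}"
    and closed_trapping_constraints:
  "closed {p. 2 * \<alpha>\<^sup>2 \<le> S_map \<alpha> p \<and> 2 * \<alpha>\<^sup>2 \<le> 2 * \<alpha> * S_map \<alpha> p + (1 - \<alpha>) * snd p}"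
  unfolding trapping_region_def S_map_def
  by (auto intro!: closed_Collect_conj closed_Collect_le continuous_intros)

lemma A_I_closed_Int: "A_I \<alpha> = unit_square \<inter> {p. 2 * \<alpha>\<^sup>2 \<le> S_map \<alpha> p}"
    and closed_A_I_constraint: "closed {p. 2 * \<alpha>\<^sup>2 \<le> S_map \<alpha> p}"
  unfolding A_I_def S_map_def by (auto intro!: closed_Collect_le continuous_intros)

lemma double_square_less:
  fixes \<alpha> :: real
  assumes "0 < \<alpha>" "\<alpha> < 1/2"
  shows "2 * \<alpha>\<^sup>2 < \<alpha>"
  using assms mult_strict_right_mono[of "2 * \<alpha>" 1 \<alpha>] by (simp add: power2_eq_square)

text \<open>In the next two lemmas \<open>t\<close> is the new second coordinate and \<open>\<alpha> t + (1 - \<alpha>) y\<close> the new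
  value of \<open>S\<close>.\<close>

lemma trapping_step_increasing_branch:
  fixes \<alpha> s y :: real
  assumes a: "0 < \<alpha>" "\<alpha> < 1/2"
    and s: "s \<ge> 2 * \<alpha>\<^sup>2" "2 * \<alpha> * s + (1 - \<alpha>) * y \<ge> 2 * \<alpha>\<^sup>2"
  defines "t \<equiv> 2 * s"
  shows "\<alpha> * t + (1 - \<alpha>) * y \<ge> 2 * \<alpha>\<^sup>2"
    and "2 * \<alpha> * (\<alpha> * t + (1 - \<alpha>) * y) + (1 - \<alpha>) * t \<ge> 2 * \<alpha>\<^sup>2"
proof -
  show new_S: "\<alpha> * t + (1 - \<alpha>) * y \<ge> 2 * \<alpha>\<^sup>2"
    using s(2) by (simp add: t_def algebra_simps)
  have "(1 - \<alpha>) * t = 2 * (1 - \<alpha>) * s"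
    by (simp add: t_def)
  also have "\<dots> \<ge> 2 * (1 - \<alpha>) * (2 * \<alpha>\<^sup>2)"
    using s(1) a by (intro mult_left_mono) auto
  also have "2 * (1 - \<alpha>) * (2 * \<alpha>\<^sup>2) \<ge> 2 * \<alpha>\<^sup>2"
    using a by simp
  finally have "(1 - \<alpha>) * t \<ge> 2 * \<alpha>\<^sup>2" .
  moreover have "2 * \<alpha> * (\<alpha> * t + (1 - \<alpha>) * y) \<ge> 0"
    using new_S a zero_le_power2[of \<alpha>] by (intro mult_nonneg_nonneg) linarith+
  ultimately show "2 * \<alpha> * (\<alpha> * t + (1 - \<alpha>) * y) + (1 - \<alpha>) * t \<ge> 2 * \<alpha>\<^sup>2"
    by linarith
qed

lemma trapping_step_decreasing_branch:
  fixes \<alpha> t y :: real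
  assumes a: "0 < \<alpha>" "\<alpha> < 1/2" and y: "0 \<le> y" "y \<le> 1"
    and t: "t \<ge> 0" "t \<ge> 2 * \<alpha> * (1 - y)"
  shows "\<alpha> * t + (1 - \<alpha>) * y \<ge> 2 * \<alpha>\<^sup>2"
    and "2 * \<alpha> * (\<alpha> * t + (1 - \<alpha>) * y) + (1 - \<alpha>) * t \<ge> 2 * \<alpha>\<^sup>2"
proof -
  have "\<alpha> * t \<ge> 2 * \<alpha>\<^sup>2 * (1 - y)"
    using mult_left_mono[OF t(2), of \<alpha>] a by (simp add: power2_eq_square algebra_simps)
  moreover have "y * (1 - \<alpha> - 2 * \<alpha>\<^sup>2) \<ge> 0"
    using y double_square_less[OF a] a by simp
  ultimately show "\<alpha> * t + (1 - \<alpha>) * y \<ge> 2 * \<alpha>\<^sup>2"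
    by (simp add: algebra_simps)
  have "(1 - \<alpha>) * (t + 2 * \<alpha> * y) \<ge> (1 - \<alpha>) * (2 * \<alpha>)"
    using t a by (intro mult_left_mono) (simp_all add: algebra_simps)
  moreover have "2 * \<alpha>\<^sup>2 * t \<ge> 0"
    using t by simp
  moreover have "\<alpha>\<^sup>2 \<le> \<alpha> * (1 - \<alpha>)"
    using a by (simp add: power2_eq_square mult_left_mono)
  ultimately show "2 * \<alpha> * (\<alpha> * t + (1 - \<alpha>) * y) + (1 - \<alpha>) * t \<ge> 2 * \<alpha>\<^sup>2"
    by (simp add: algebra_simps power2_eq_square)
qed

lemma G_map_trapping_region:
  assumes a: "0 < \<alpha>" "\<alpha> < 1/2" and p: "p \<in> trapping_region \<alpha>"
  shows "G_map \<alpha> p \<in> trapping_region \<alpha>"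
proof -
  obtain x y where xy: "p = (x, y)" by (cases p)
  have x: "0 \<le> x" "x \<le> 1" and y: "0 \<le> y" "y \<le> 1"
    using p xy by (auto simp: trapping_region_def unit_square_def)
  define s where "s = \<alpha> * y + (1 - \<alpha>) * x"
  define t where "t = tent s"
  have s: "s \<ge> 2 * \<alpha>\<^sup>2" "2 * \<alpha> * s + (1 - \<alpha>) * y \<ge> 2 * \<alpha>\<^sup>2" "s \<le> 1"
    using p S_map_unit_interval(2)[of \<alpha> p] a
    by (auto simp: trapping_region_def S_map_def s_def xy)
  have "\<alpha> * t + (1 - \<alpha>) * y \<ge> 2 * \<alpha>\<^sup>2 \<and> 2 * \<alpha> * (\<alpha> * t + (1 - \<alpha>) * y) + (1 - \<alpha>) * t \<ge> 2 * \<alpha>\<^sup>2"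
  proof (cases "s < 1/2")
    case True
    then show ?thesis
      using trapping_step_increasing_branch[OF a s(1,2)] by (simp add: t_def tent_def)
  next
    case False
    have "(1 - \<alpha>) * x \<le> 1 - \<alpha>"
      using x a by (simp add: mult_left_le)
    then have "t \<ge> 0" "t \<ge> 2 * \<alpha> * (1 - y)"
      using False s(3) by (simp_all add: t_def tent_def s_def algebra_simps)
    then show ?thesis
      using trapping_step_decreasing_branch[OF a y] by simp
  qed
  moreover have "G_map \<alpha> p = (y, t)"
    by (simp add: G_map_def S_map_def xy s_def t_def)
  ultimately show ?thesis
    using G_map_unit_square[of \<alpha> p] a p by (simp add: trapping_region_def S_map_def)
qed

lemma funpow_G_map_trapping_region:
  assumes "0 < \<alpha>" "\<alpha> < 1/2" "p \<in> trapping_region \<alpha>"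
  shows "(G_map \<alpha> ^^ n) p \<in> trapping_region \<alpha>"
  by (induction n) (auto intro: G_map_trapping_region[OF assms(1,2)] simp: assms(3))

lemma G_map_sum_growth:
  assumes a: "0 < \<alpha>" "\<alpha> < 1/2" and p: "p \<in> unit_square - trapping_region \<alpha>"
  shows "fst (G_map \<alpha> p) + snd (G_map \<alpha> p) \<ge> min (2 - 2 * \<alpha>) (1 + 2 * \<alpha>) * (fst p + snd p)"
proof -
  obtain x y where xy: "p = (x, y)" by (cases p)
  have x: "0 \<le> x" and y: "0 \<le> y"
    using p xy by (auto simp: unit_square_def)
  define s where "s = \<alpha> * y + (1 - \<alpha>) * x"
  have "s < 2 * \<alpha>\<^sup>2 \<or> 2 * \<alpha> * s + (1 - \<alpha>) * y < 2 * \<alpha>\<^sup>2"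
    using p by (auto simp: trapping_region_def S_map_def s_def xy)
  then have "s < \<alpha>"
  proof
    assume "s < 2 * \<alpha>\<^sup>2"
    then show "s < \<alpha>"
      using double_square_less[OF a] by linarith
  next
    assume "2 * \<alpha> * s + (1 - \<alpha>) * y < 2 * \<alpha>\<^sup>2"
    moreover have "(1 - \<alpha>) * y \<ge> 0"
      using a y by simp
    ultimately have "2 * \<alpha> * s < 2 * \<alpha> * \<alpha>"
      by (simp add: power2_eq_square)
    then show "s < \<alpha>"
      using a by simp
  qed
  then have "s < 1/2"
    using a by simp
  then have "G_map \<alpha> p = (y, 2 * s)"
    by (simp add: G_map_def S_map_def tent_def s_def xy)
  moreover have "min (2 - 2 * \<alpha>) (1 + 2 * \<alpha>) * (x + y) \<le> (2 - 2 * \<alpha>) * x + (1 + 2 * \<alpha>) * y"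
    using x y by (simp add: distrib_left add_mono mult_right_mono)
  ultimately show ?thesis
    by (simp add: xy s_def algebra_simps)
qed

lemma eventually_trapping_region:
  assumes a: "0 < \<alpha>" "\<alpha> < 1/2" and p: "p \<in> unit_square - {(0, 0)}"
  shows "\<exists>n. (G_map \<alpha> ^^ n) p \<in> trapping_region \<alpha>"
proof (rule ccontr)
  assume outside: "\<nexists>n. (G_map \<alpha> ^^ n) p \<in> trapping_region \<alpha>"
  define k where "k = min (2 - 2 * \<alpha>) (1 + 2 * \<alpha>)"
  define V where "V q = fst q + snd q" for q :: "real \<times> real"
  have k: "k > 1"
    using a by (simp add: k_def)
  have orbit: "(G_map \<alpha> ^^ n) p \<in> unit_square" for n
    using a p by (intro funpow_G_map_unit_square) auto
  have growth: "V ((G_map \<alpha> ^^ n) p) \<ge> k ^ n * V p" for n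
  proof (induction n)
    case (Suc n)
    have "k ^ Suc n * V p \<le> k * V ((G_map \<alpha> ^^ n) p)"
      using Suc k by (simp add: mult_left_mono)
    also have "\<dots> \<le> V ((G_map \<alpha> ^^ Suc n) p)"
      using G_map_sum_growth[OF a] orbit outside by (simp add: V_def k_def)
    finally show ?case .
  qed simp
  have "V p > 0"
    using p by (cases p) (auto simp: V_def unit_square_def)
  then obtain n where "2 < k ^ n * V p"
    using real_arch_pow[OF k, of "2 / V p"] by (auto simp: field_simps)
  moreover have "V ((G_map \<alpha> ^^ n) p) \<le> 2"
    using orbit[of n] by (auto simp: V_def unit_square_def)
  ultimately show False
    using growth[of n] by linarith
qed

lemma eventually_A_I:
  assumes "0 < \<alpha>" "\<alpha> < 1/2" "p \<in> unit_square - {(0, 0)}"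
  shows "\<exists>N. \<forall>n \<ge> N. (G_map \<alpha> ^^ n) p \<in> A_I \<alpha>"
proof -
  obtain N where N: "(G_map \<alpha> ^^ N) p \<in> trapping_region \<alpha>"
    using eventually_trapping_region[OF assms] by blast
  have "(G_map \<alpha> ^^ n) p \<in> A_I \<alpha>" if "n \<ge> N" for n
  proof -
    have "(G_map \<alpha> ^^ n) p = (G_map \<alpha> ^^ (n - N)) ((G_map \<alpha> ^^ N) p)"
      using that by (simp flip: funpow_add[unfolded comp_def, THEN fun_cong])
    then show ?thesis
      using funpow_G_map_trapping_region[OF assms(1,2) N] trapping_region_subset_A_I by auto
  qed
  then show ?thesis by blast
qed

lemma emeasure_A_I_eq_1:
  assumes a: "0 < \<alpha>" "\<alpha> < 1/2"
    and M: "invariant_borel_prob_on_square (G_map \<alpha>) M" and origin: "emeasure M {(0, 0)} = 0"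
  shows "emeasure M (A_I \<alpha>) = 1"
proof -
  have P: "prob_space M" and space: "space M = unit_square"
    and sets_M: "sets M = sets (restrict_space borel unit_square)"
    and G: "G_map \<alpha> \<in> M \<rightarrow>\<^sub>M M"
    and preserving: "\<And>B. B \<in> sets M \<Longrightarrow> emeasure M (G_map \<alpha> -` B \<inter> space M) = emeasure M B"
    using M unfolding invariant_borel_prob_on_square_def by auto
  have closed_sets: "unit_square \<inter> C \<in> sets M" if "closed C" for C
    using that by (auto simp: sets_M sets_restrict_space)
  have R: "trapping_region \<alpha> \<in> sets M"
    unfolding trapping_region_closed_Int by (intro closed_sets closed_trapping_constraints)
  have A: "A_I \<alpha> \<in> sets M"
    unfolding A_I_closed_Int by (intro closed_sets closed_A_I_constraint)
  have "{(0, 0)} = unit_square \<inter> {(0::real, 0::real)}"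
    by (auto simp: unit_square_def)
  then have "{(0, 0)} \<in> null_sets M"
    using closed_sets[of "{(0, 0)}"] origin by auto
  then have "emeasure M (trapping_region \<alpha>) = 1"
    using P G preserving R G_map_trapping_region[OF a] eventually_trapping_region[OF a]
    by (intro prob_space.emeasure_absorbing_set_eq_1[where T = "G_map \<alpha>" and Z = "{(0, 0)}"])
      (auto simp: space)
  then show ?thesis
    using emeasure_mono[OF trapping_region_subset_A_I A] prob_space.emeasure_le_1[OF P, of "A_I \<alpha>"]
    by simp
qed

theorem proposition5:
  fixes \<alpha> :: real
  assumes "0 < \<alpha>" and "\<alpha> < 1/2"
  shows "(\<forall>p \<in> unit_square - {(0, 0)}. \<exists>N::nat. \<forall>n \<ge> N. (G_map \<alpha> ^^ n) p \<in> A_I \<alpha>)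
       \<and> (\<forall>M. invariant_borel_prob_on_square (G_map \<alpha>) M \<and> emeasure M {(0, 0)} = 0
               \<longrightarrow> emeasure M (A_I \<alpha>) = 1)"
  using eventually_A_I[OF assms] emeasure_A_I_eq_1[OF assms] by blast

end
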